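(* Let $\mathfrak L=\mathbb V\oplus\mathbb W$ be a color gLt-algebra admitting a quasi-multiplicative basis $\mathfrak B=\{e_i\}_{i\in I}$ of $\mathbb W\neq 0$. If $[i]\neq[h]$ for some $i,h\in I$, then $\langle\mathfrak J_{[i]},\mathfrak J_{[h]},\mathfrak L,\dots,\mathfrak L\rangle_\sigma=0$ for every $\sigma\in\mathbb S_n$.
   Context: Let $\mathbb F$ be a field, $\mathbb G$ an abelian group, $n\ge 2$, and $\epsilon:\mathbb G\times\mathbb G\to\mathbb F\setminus\{0\}$ a bicharacter ($\epsilon(k,g+h)=\epsilon(k,g)\epsilon(k,h)$, $\epsilon(g+h,k)=\epsilon(g,k)\epsilon(h,k)$, $\epsilon(g,h)\epsilon(h,g)=1$). A graded $n$-ary algebra is a $\mathbb G$-graded vector space $\mathfrak L=\bigoplus_{g\in\mathbb G}\mathfrak L_g$ with an $n$-linear map $\langle\cdot,\dots,\cdot\rangle:\mathfrak L^n\to\mathfrak L$ such that $\langle\mathfrak L_{g_1},\dots,\mathfrak L_{g_n}\rangle\subset\mathfrak L_{g_1+\dots+g_n}$. For $\sigma\in\mathbb S_n$ write $\langle x_1,\dots,x_n\rangle_\sigma:=\langle x_{\sigma(1)},\dots,x_{\sigma(n)}\rangle$; for subsets $A_1,\dots,A_n$, $\langle A_1,\dots,A_n\rangle_\sigma$ denotes the linear span of all $\langle x_1,\dots,x_n\rangle_\sigma$ with $x_r\in A_r$. A color gLt-algebra is a graded $n$-ary algebra satisfying, for each $k=1,\dots,n$ and fixed scalars $\alpha^{\sigma_1,\sigma_2}_{i,j,k}\in\mathbb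 F$, the color version (each term on the right multiplied by the product of values of $\epsilon$ on the degrees of the homogeneous arguments transposed in passing from the left-hand order to the order of that term) of the identity $\langle y_1,\dots,y_{k-1},\langle x_1,\dots,x_n\rangle,y_k,\dots,y_{n-1}\rangle=\sum_{1\le i,j\le n,\,\sigma_1\in\mathbb S_n,\,\sigma_2\in\mathbb S_{n-1}}\alpha^{\sigma_1,\sigma_2}_{i,j,k}\langle x_{\sigma_1(1)},\dots,x_{\sigma_1(i-1)},\langle y_{\sigma_2(1)},\dots,y_{\sigma_2(j-1)},x_{\sigma_1(i)},y_{\sigma_2(j)},\dots,y_{\sigma_2(n-1)}\rangle,x_{\sigma_1(i+1)},\dots,x_{\sigma_1(n)}\rangle$. $\mathfrak L$ admits a quasi-multiplicative basis if $\mathfrak L=\mathbb V\oplus\mathbb W$ with $\mathbb V$, $\mathbb W\ne0$ graded subspaces and $\mathfrak B=\{e_i\}_{i\in I}$ a basis of homogeneous elements of $\mathbb W$ such that: (1) for $i_1,\dots,i_n\in I$, either $\langle e_{i_1},\dots,e_{i_n}\rangle\in\mathbb Fe_j$ for some $j\in I$ or $\langle e_{i_1},\dots,e_{i_n}\rangle\in\mathbb V$; (2) for $0<k<n$, $i_1,\dots,i_k\in I$ and $\sigma\in\mathbb S_n$, $\langle e_{i_1},\dots,e_{i_k},\mathbb V,\dots,\mathbb V\rangle_\sigma\subset\mathbb Fe_{j_\sigma}$ for some $j_\sigma\in I$; (3) either $\langle\mathbb V,\dots,\mathbb V\rangle\subset\mathbb Fe_j$ for some $j\in I$ or $\langle\mathbb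 V,\dots,\mathbb V\rangle\subset\mathbb V$. Index maps: let $v$ be a symbol not in $I$, $\mathfrak I:=I\,\dot\cup\,\{v\}$; for each $j\in\mathfrak I$ take a new symbol $\overline j$, $\overline I:=\{\overline i:i\in I\}$, $\overline{\mathfrak I}:=\overline I\,\dot\cup\,\{\overline v\}$; set $\overline{(\overline j)}:=j$, $\overline J:=\{\overline j:j\in J\}$ for a set $J$ of symbols ($\overline\emptyset=\emptyset$). Put $u_j:=e_j$ for $j\in I$ and $u_v:=\mathbb V$. For $\sigma\in\mathbb S_n$ and $(j_1,\dots,j_n)\in\mathfrak I^n$ let $a_\sigma(j_1,\dots,j_n)=\{r\}$ if $r\in I$ and $0\ne\langle u_{j_1},\dots,u_{j_n}\rangle_\sigma\subset\mathbb Fe_r$, $=\{v\}$ if $0\ne\langle u_{j_1},\dots,u_{j_n}\rangle_\sigma\subset\mathbb V$, and $=\emptyset$ otherwise. For $j,j_2,\dots,j_n\in\mathfrak I$ let $b_\sigma(j,\overline j_2,\dots,\overline j_n):=\{x\in\mathfrak I: a_\sigma(x,j_2,\dots,j_n)=\{j\}\}$. Define $\mu$ on $(\mathfrak I\,\dot\cup\,\overline{\mathfrak I})\times(\mathfrak I^{n-1}\,\dot\cup\,\overline{\mathfrak I}^{n-1})$ with values subsets of $\mathfrak I$ by: $\mu(j,j_1,\dots,j_{n-1})=\bigcup_{\sigma\in\mathbb S_n}a_\sigma(j,j_1,\dots,j_{n-1})$ for $j,j_1,\dots,j_{n-1}\in\mathfrak I$; $\mu(j,\overline j_1,\dots,\overline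 j_{n-1})=\bigcup_{\sigma\in\mathbb S_n}b_\sigma(j,\overline j_1,\dots,\overline j_{n-1})$ for $j,j_1,\dots,j_{n-1}\in\mathfrak I$; $\mu(\overline j,j_1,\dots,j_{n-1})=\bigcup_{1\le k\le n-1,\ \sigma\in\mathbb S_n}b_\sigma(j_k,\overline j,\overline j_1,\dots,\overline j_{k-1},\overline j_{k+1},\dots,\overline j_{n-1})$ for $j,j_1,\dots,j_{n-1}\in\mathfrak I$; and $\mu(\overline j,\overline j_1,\dots,\overline j_{n-1})=\emptyset$. Define $\phi$ on pairs $(J,X)$ with $J\subset I\,\dot\cup\,\overline I$ and $X\in\mathfrak I^{n-1}\,\dot\cup\,\overline{\mathfrak I}^{n-1}$ by $\phi(\emptyset,X)=\emptyset$ and, for $J\ne\emptyset$, $\phi(J,X):=K\cup\overline K$ where $K:=\big(\bigcup_{j\in J}\mu(j,X)\big)\setminus\{v\}$. Connections: for distinct $i,j\in I$, $i$ is connected to $j$ if there exist $t\ge1$, $X_1,\dots,X_t\in\mathfrak I^{n-1}\,\dot\cup\,\overline{\mathfrak I}^{n-1}$ and $\widetilde i\in\{i,\overline i\}$ such that $\phi(\{\widetilde i\},X_1)\ne\emptyset$, …, $\phi(\cdots\phi(\{\widetilde i\},X_1)\cdots,X_{t-1})\ne\emptyset$, and $j\in\phi(\cdots\phi(\phi(\{\widetilde i\},X_1),X_2)\cdots,X_t)$; every $i$ is connected to itself. Being connected is an equivalence relation $\sim$ on $I$; $[i]$ denotes the class of $i$. Define $\mathbb V_{[i]}:=\big(\sum_{i_1,\dots,i_n\in[i]}\mathbb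 F\langle e_{i_1},\dots,e_{i_n}\rangle\big)\cap\mathbb V$, $\mathbb W_{[i]}:=\bigoplus_{j\in[i]}\mathbb Fe_j$, and $\mathfrak J_{[i]}:=\mathbb V_{[i]}\oplus\mathbb W_{[i]}$. *)

theory Defs
  imports Main "HOL.Vector_Spaces" "HOL-Combinatorics.Permutations"
begin

text \<open>All indices are 0-based:
argument positions 1..n of the paper become 0..n-1, and a permutation of
S_n is a function permuting {0..<n}.\<close>

definition bicharacter :: "('g::ab_group_add \<Rightarrow> 'g \<Rightarrow> 'k::field) \<Rightarrow> bool" where
  "bicharacter eps \<longleftrightarrow>
     (\<forall>g h. eps g h \<noteq> 0) \<and>
     (\<forall>k g h. eps k (g + h) = eps k g * eps k h) \<and>
     (\<forall>k g h. eps (g + h) k = eps g k * eps h k) \<and>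
     (\<forall>g h. eps g h * eps h g = 1)"

definition graded_space :: "('k::field \<Rightarrow> 'v::ab_group_add \<Rightarrow> 'v) \<Rightarrow> ('g::ab_group_add \<Rightarrow> 'v set) \<Rightarrow> bool" where
  "graded_space scl Lg \<longleftrightarrow>
     vector_space scl \<and>
     (\<forall>g. module.subspace scl (Lg g)) \<and>
     (\<forall>v. \<exists>!c. finite {g. c g \<noteq> 0} \<and> (\<forall>g. c g \<in> Lg g) \<and> v = (\<Sum>g\<in>{g. c g \<noteq> 0}. c g))"

definition homogeneous :: "('g \<Rightarrow> 'v set) \<Rightarrow> 'v \<Rightarrow> bool" where
  "homogeneous Lg x \<longleftrightarrow> (\<exists>g. x \<in> Lg g)"

definition graded_subspace :: "('k::field \<Rightarrow> 'v::ab_group_add \<Rightarrow> 'v) \<Rightarrow> ('g \<Rightarrow> 'v set) \<Rightarrow> 'v set \<Rightarrow> bool" where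
  "graded_subspace scl Lg U \<longleftrightarrow>
     module.subspace scl U \<and> U = module.span scl (\<Union>g. U \<inter> Lg g)"

definition graded_nary_algebra ::
  "('k::field \<Rightarrow> 'v::ab_group_add \<Rightarrow> 'v) \<Rightarrow> ('g::ab_group_add \<Rightarrow> 'v set) \<Rightarrow> nat \<Rightarrow> ('v list \<Rightarrow> 'v) \<Rightarrow> bool" where
  "graded_nary_algebra scl Lg n P \<longleftrightarrow>
     graded_space scl Lg \<and>
     (\<forall>xs r. length xs = n \<and> r < n \<longrightarrow> Vector_Spaces.linear scl scl (\<lambda>x. P (xs[r := x]))) \<and>
     (\<forall>xs gs. length xs = n \<and> length gs = n \<and> (\<forall>r<n. xs ! r \<in> Lg (gs ! r))
         \<longrightarrow> P xs \<in> Lg (sum_list gs))"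

text \<open>Arguments of the identity are tagged: TX r is x_(r+1), TY r is y_(r+1).\<close>
datatype arg_tag = TX nat | TY nat

text \<open>Given the degree of each tagged argument, the original (left-hand) order L
and the new order T of the same arguments, the colour factor is the product of
eps (deg a) (deg b) over all pairs a, b with a before b in L and b before a in T.\<close>
definition colour_factor ::
  "('g \<Rightarrow> 'g \<Rightarrow> 'k::field) \<Rightarrow> (arg_tag \<Rightarrow> 'g) \<Rightarrow> arg_tag list \<Rightarrow> arg_tag list \<Rightarrow> 'k" where
  "colour_factor eps deg L T =
     (\<Prod>(p, q)\<in>{(p, q). p < q \<and> q < length L \<and>
                  (\<exists>p' q'. q' < p' \<and> p' < length T \<and> T ! p' = L ! p \<and> T ! q' = L ! q)}.
        eps (deg (L ! p)) (deg (L ! q)))"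

text \<open>Left-hand order for the inner product in position k (0-based: k of the y's precede it).\<close>
definition lhs_order :: "nat \<Rightarrow> nat \<Rightarrow> arg_tag list" where
  "lhs_order n k = map TY [0..<k] @ map TX [0..<n] @ map TY [k..<n - 1]"

definition rhs_order :: "nat \<Rightarrow> nat \<Rightarrow> nat \<Rightarrow> (nat \<Rightarrow> nat) \<Rightarrow> (nat \<Rightarrow> nat) \<Rightarrow> arg_tag list" where
  "rhs_order n i j s1 s2 =
     map (TX \<circ> s1) [0..<i] @ map (TY \<circ> s2) [0..<j] @ [TX (s1 i)] @
     map (TY \<circ> s2) [j..<n - 1] @ map (TX \<circ> s1) [Suc i..<n]"

definition lhs_term :: "('v list \<Rightarrow> 'v) \<Rightarrow> nat \<Rightarrow> 'v list \<Rightarrow> 'v list \<Rightarrow> 'v" where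
  "lhs_term P k xs ys = P (take k ys @ [P xs] @ drop k ys)"

definition rhs_term ::
  "('v list \<Rightarrow> 'v) \<Rightarrow> nat \<Rightarrow> nat \<Rightarrow> nat \<Rightarrow> (nat \<Rightarrow> nat) \<Rightarrow> (nat \<Rightarrow> nat) \<Rightarrow> 'v list \<Rightarrow> 'v list \<Rightarrow> 'v" where
  "rhs_term P n i j s1 s2 xs ys =
     P (map (\<lambda>r. xs ! s1 r) [0..<i] @
        [P (map (\<lambda>r. ys ! s2 r) [0..<j] @ [xs ! s1 i] @ map (\<lambda>r. ys ! s2 r) [j..<n - 1])] @
        map (\<lambda>r. xs ! s1 r) [Suc i..<n])"

definition tag_degree :: "'g list \<Rightarrow> 'g list \<Rightarrow> arg_tag \<Rightarrow> 'g" where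
  "tag_degree gs hs t = (case t of TX r \<Rightarrow> gs ! r | TY r \<Rightarrow> hs ! r)"

definition colour_gLt_algebra ::
  "('k::field \<Rightarrow> 'v::ab_group_add \<Rightarrow> 'v) \<Rightarrow> ('g::ab_group_add \<Rightarrow> 'v set) \<Rightarrow> ('g \<Rightarrow> 'g \<Rightarrow> 'k)
   \<Rightarrow> nat \<Rightarrow> ('v list \<Rightarrow> 'v) \<Rightarrow> (nat \<Rightarrow> nat \<Rightarrow> nat \<Rightarrow> (nat \<Rightarrow> nat) \<Rightarrow> (nat \<Rightarrow> nat) \<Rightarrow> 'k) \<Rightarrow> bool" where
  "colour_gLt_algebra scl Lg eps n P alpha \<longleftrightarrow>
     n \<ge> 2 \<and> graded_nary_algebra scl Lg n P \<and> bicharacter eps \<and>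
     (\<forall>k < n. \<forall>xs ys gs hs.
        length xs = n \<and> length gs = n \<and> length ys = n - 1 \<and> length hs = n - 1 \<and>
        (\<forall>r<n. xs ! r \<in> Lg (gs ! r)) \<and> (\<forall>r<n - 1. ys ! r \<in> Lg (hs ! r)) \<longrightarrow>
        lhs_term P k xs ys =
          (\<Sum>(i, j, s1, s2) \<in> {0..<n} \<times> {0..<n} \<times> {s. s permutes {0..<n}} \<times> {s. s permutes {0..<n - 1}}.
             scl (alpha i j k s1 s2 *
                  colour_factor eps (tag_degree gs hs) (lhs_order n k) (rhs_order n i j s1 s2))
                 (rhs_term P n i j s1 s2 xs ys)))"

definition brk :: "('k::field \<Rightarrow> 'v::ab_group_add \<Rightarrow> 'v) \<Rightarrow> nat \<Rightarrow> ('v list \<Rightarrow> 'v) \<Rightarrow> (nat \<Rightarrow> nat) \<Rightarrow> 'v set list \<Rightarrow> 'v set" where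
  "brk scl n P s As = module.span scl
     {P (map (\<lambda>r. xs ! s r) [0..<n]) | xs. length xs = n \<and> (\<forall>r<n. xs ! r \<in> As ! r)}"

definition line :: "('k \<Rightarrow> 'v \<Rightarrow> 'v) \<Rightarrow> 'v \<Rightarrow> 'v set" where
  "line scl x = range (\<lambda>c. scl c x)"

definition quasi_mult_basis ::
  "('k::field \<Rightarrow> 'v::ab_group_add \<Rightarrow> 'v) \<Rightarrow> ('g::ab_group_add \<Rightarrow> 'v set) \<Rightarrow> nat \<Rightarrow> ('v list \<Rightarrow> 'v)
   \<Rightarrow> 'v set \<Rightarrow> 'v set \<Rightarrow> ('i \<Rightarrow> 'v) \<Rightarrow> bool" where
  "quasi_mult_basis scl Lg n P V W e \<longleftrightarrow>
     graded_subspace scl Lg V \<and> graded_subspace scl Lg W \<and>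
     V \<noteq> {0} \<and> W \<noteq> {0} \<and> V \<inter> W = {0} \<and> {v + w | v w. v \<in> V \<and> w \<in> W} = UNIV \<and>
     inj e \<and> \<not> module.dependent scl (range e) \<and> module.span scl (range e) = W \<and>
     (\<forall>i. homogeneous Lg (e i)) \<and>
     (\<forall>is. length is = n \<longrightarrow> (\<exists>j. P (map e is) \<in> line scl (e j)) \<or> P (map e is) \<in> V) \<and>
     (\<forall>k is s. 0 < k \<and> k < n \<and> length is = k \<and> s permutes {0..<n} \<longrightarrow>
        (\<exists>j. brk scl n P s (map (\<lambda>i. {e i}) is @ replicate (n - k) V) \<subseteq> line scl (e j))) \<and>
     ((\<exists>j. brk scl n P id (replicate n V) \<subseteq> line scl (e j)) \<or> brk scl n P id (replicate n V) \<subseteq> V)"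

text \<open>The index set I is the type 'i; the extended index set I plus {v} is 'i option,
with None playing the role of v.  Barred symbols are Br, unbarred ones Pl.  A
tuple in 'J^(n-1) is PlT js, a tuple of barred symbols is BrT js.\<close>
datatype 'a bsym = Pl 'a | Br 'a
datatype 'a btup = PlT "'a list" | BrT "'a list"

definition uset :: "('i \<Rightarrow> 'v) \<Rightarrow> 'v set \<Rightarrow> 'i option \<Rightarrow> 'v set" where
  "uset e V j = (case j of Some i \<Rightarrow> {e i} | None \<Rightarrow> V)"

definition amap ::
  "('k::field \<Rightarrow> 'v::ab_group_add \<Rightarrow> 'v) \<Rightarrow> nat \<Rightarrow> ('v list \<Rightarrow> 'v) \<Rightarrow> 'v set \<Rightarrow> ('i \<Rightarrow> 'v)
   \<Rightarrow> (nat \<Rightarrow> nat) \<Rightarrow> 'i option list \<Rightarrow> 'i option set" where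
  "amap scl n P V e s js =
     (let B = brk scl n P s (map (uset e V) js) in
      {Some r | r. B \<noteq> {0} \<and> B \<subseteq> line scl (e r)} \<union> (if B \<noteq> {0} \<and> B \<subseteq> V then {None} else {}))"

definition bmap ::
  "('k::field \<Rightarrow> 'v::ab_group_add \<Rightarrow> 'v) \<Rightarrow> nat \<Rightarrow> ('v list \<Rightarrow> 'v) \<Rightarrow> 'v set \<Rightarrow> ('i \<Rightarrow> 'v)
   \<Rightarrow> (nat \<Rightarrow> nat) \<Rightarrow> 'i option \<Rightarrow> 'i option list \<Rightarrow> 'i option set" where
  "bmap scl n P V e s j js = {x. amap scl n P V e s (x # js) = {j}}"

definition mu ::
  "('k::field \<Rightarrow> 'v::ab_group_add \<Rightarrow> 'v) \<Rightarrow> nat \<Rightarrow> ('v list \<Rightarrow> 'v) \<Rightarrow> 'v set \<Rightarrow> ('i \<Rightarrow> 'v)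
   \<Rightarrow> 'i option bsym \<Rightarrow> 'i option btup \<Rightarrow> 'i option set" where
  "mu scl n P V e a X =
     (case (a, X) of
        (Pl j, PlT js) \<Rightarrow> (\<Union>s\<in>{s. s permutes {0..<n}}. amap scl n P V e s (j # js))
      | (Pl j, BrT js) \<Rightarrow> (\<Union>s\<in>{s. s permutes {0..<n}}. bmap scl n P V e s j js)
      | (Br j, PlT js) \<Rightarrow> (\<Union>k\<in>{0..<n - 1}. \<Union>s\<in>{s. s permutes {0..<n}}.
                              bmap scl n P V e s (js ! k) (j # take k js @ drop (Suc k) js))
      | (Br j, BrT js) \<Rightarrow> {})"

definition phi ::
  "('k::field \<Rightarrow> 'v::ab_group_add \<Rightarrow> 'v) \<Rightarrow> nat \<Rightarrow> ('v list \<Rightarrow> 'v) \<Rightarrow> 'v set \<Rightarrow> ('i \<Rightarrow> 'v)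
   \<Rightarrow> 'i bsym set \<Rightarrow> 'i option btup \<Rightarrow> 'i bsym set" where
  "phi scl n P V e J X =
     (if J = {} then {}
      else (let K = {i. \<exists>a\<in>J. Some i \<in> mu scl n P V e (map_bsym Some a) X}
            in Pl ` K \<union> Br ` K))"

definition btup_len :: "'a btup \<Rightarrow> nat" where
  "btup_len X = (case X of PlT js \<Rightarrow> length js | BrT js \<Rightarrow> length js)"

definition connected ::
  "('k::field \<Rightarrow> 'v::ab_group_add \<Rightarrow> 'v) \<Rightarrow> nat \<Rightarrow> ('v list \<Rightarrow> 'v) \<Rightarrow> 'v set \<Rightarrow> ('i \<Rightarrow> 'v)
   \<Rightarrow> 'i \<Rightarrow> 'i \<Rightarrow> bool" where
  "connected scl n P V e i j \<longleftrightarrow>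
     i = j \<or>
     (\<exists>Xs a. Xs \<noteq> [] \<and> (\<forall>X\<in>set Xs. btup_len X = n - 1) \<and> a \<in> {Pl i, Br i} \<and>
        (\<forall>t\<in>{1..<length Xs}. foldl (phi scl n P V e) {a} (take t Xs) \<noteq> {}) \<and>
        Pl j \<in> foldl (phi scl n P V e) {a} Xs)"

definition cls ::
  "('k::field \<Rightarrow> 'v::ab_group_add \<Rightarrow> 'v) \<Rightarrow> nat \<Rightarrow> ('v list \<Rightarrow> 'v) \<Rightarrow> 'v set \<Rightarrow> ('i \<Rightarrow> 'v) \<Rightarrow> 'i \<Rightarrow> 'i set" where
  "cls scl n P V e i = {j. connected scl n P V e i j}"

definition Jcls ::
  "('k::field \<Rightarrow> 'v::ab_group_add \<Rightarrow> 'v) \<Rightarrow> nat \<Rightarrow> ('v list \<Rightarrow> 'v) \<Rightarrow> 'v set \<Rightarrow> ('i \<Rightarrow> 'v) \<Rightarrow> 'i \<Rightarrow> 'v set" where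
  "Jcls scl n P V e i =
     (let C = cls scl n P V e i;
          VC = module.span scl {P (map e is) | is. length is = n \<and> set is \<subseteq> C} \<inter> V;
          WC = module.span scl (e ` C)
      in {a + b | a b. a \<in> VC \<and> b \<in> WC})"

end

theory Submission
  imports Defs
begin

text \<open>Being connected is the reflexive transitive closure of a symmetric one-step relation
  \<open>linked\<close> read off the index maps.  If a product has basis vectors \<open>e\<^sub>j\<close>, \<open>e\<^sub>k\<close> in two
  slots, its other arguments in \<open>V \<union> {e\<^sub>i}\<close>, and is nonzero, then the quasi-multiplicative axioms
  place the corresponding bracket in a line \<open>\<bbbF>e\<^sub>r\<close> or in \<open>V\<close>, and the index maps link \<open>j\<close> to
  \<open>k\<close> through \<open>r\<close> or directly.  So, by multilinearity, basis vectors of distinct classes annihilate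
  each other in every product.  The gLt identity rewrites a product having a basis product
  \<open>\<langle>e\<^sub>i\<^sub>1, \<dots>, e\<^sub>i\<^sub>n\<rangle>\<close> as an argument into a combination of products in which a single
  \<open>e\<^sub>i\<^sub>r\<close> meets all other arguments inside an inner product; hence the annihilation extends
  to products of basis vectors of a class, which together with its basis vectors span
  \<open>Jcls i\<close>.\<close>

section \<open>Multilinear n-ary products\<close>

lemma permutes_obtain_0_1:
  fixes p q n :: nat
  assumes "p < n" "q < n" "p \<noteq> q"
  obtains s where "s permutes {0..<n}" "s p = 0" "s q = 1"
proof
  let ?t = "Transposition.transpose 0 p"
  let ?s = "Transposition.transpose 1 (?t q) \<circ> ?t"
  have t: "?t permutes {0..<n}" using assms by (intro permutes_swap_id) auto
  then have "?t q < n" using assms(2) permutes_in_image by fastforce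
  then show "?s permutes {0..<n}" using t assms by (intro permutes_compose permutes_swap_id) auto
  show "?s p = 0" "?s q = 1" using assms(3) by (auto simp: transpose_def)
qed

locale nary_multilinear = vector_space scl
  for scl :: "'k::field \<Rightarrow> 'v::ab_group_add \<Rightarrow> 'v" +
  fixes n :: nat and P :: "'v list \<Rightarrow> 'v"
  assumes linear_update: "length xs = n \<Longrightarrow> r < n \<Longrightarrow> Vector_Spaces.linear scl scl (\<lambda>x. P (xs[r := x]))"
begin

lemma eq_0_if_nth_eq_0:
  assumes "length xs = n" "r < n" "xs ! r = 0"
  shows "P xs = 0"
proof -
  interpret linear scl scl "\<lambda>x. P (xs[r := x])" using linear_update[OF assms(1,2)] .
  show ?thesis using zero assms(3) by (metis list_update_id)
qed

lemma eq_0_on_spans: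
  assumes gens: "\<And>xs. length xs = n \<Longrightarrow> \<forall>r<n. xs ! r \<in> G r \<Longrightarrow> P xs = 0"
    and "length xs = n" "\<forall>r<n. xs ! r \<in> span (G r)"
  shows "P xs = 0"
proof -
  \<comment> \<open>Pass from generators to spans one argument position at a time.\<close>
  have "P xs = 0" if "length xs = n" "\<forall>r<n. xs ! r \<in> (if r < m then span (G r) else G r)" for m xs
    using that
  proof (induction m arbitrary: xs)
    case 0
    then show ?case using gens by simp
  next
    case (Suc m)
    show ?case
    proof (cases "m < n")
      case False
      then show ?thesis using Suc by (metis less_SucI not_less order.strict_trans2)
    next
      case True
      interpret linear scl scl "\<lambda>x. P (xs[m := x])" using linear_update[OF Suc.prems(1) True] .
      have "P (xs[m := x]) = 0" if "x \<in> G m" for x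
      proof (rule Suc.IH)
        show "\<forall>r<n. xs[m := x] ! r \<in> (if r < m then span (G r) else G r)"
          using Suc.prems that by (auto simp: nth_list_update less_Suc_eq)
      qed (use Suc.prems in simp)
      moreover have "xs ! m \<in> span (G m)" using Suc.prems(2) True by auto
      ultimately have "P (xs[m := xs ! m]) = 0" by (rule eq_0_on_span)
      then show ?thesis by simp
    qed
  qed
  from this[where m = n] show ?thesis using assms(2,3) by simp
qed

lemma brk_subset_brk_permute_list:
  assumes "length As = n" "p permutes {0..<n}" "s permutes {0..<n}"
  shows "brk scl n P (p \<circ> s) As \<subseteq> brk scl n P s (permute_list p As)"
  unfolding brk_def
proof (rule span_mono, rule subsetI)
  fix z assume "z \<in> {P (map (\<lambda>r. ys ! (p \<circ> s) r) [0..<n]) | ys. length ys = n \<and> (\<forall>r<n. ys ! r \<in> As ! r)}"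
  then obtain ys where ys: "z = P (map (\<lambda>r. ys ! (p \<circ> s) r) [0..<n])" "length ys = n"
      "\<forall>r<n. ys ! r \<in> As ! r"
    by blast
  have p: "p permutes {..<n}" using assms(2) by (simp add: atLeast0LessThan)
  have nth: "permute_list p ys ! r = ys ! p r" "permute_list p As ! r = As ! p r" if "r < n" for r
    using permute_list_nth[of p ys r] permute_list_nth[of p As r] p assms(1) ys(2) that by simp_all
  have "map (\<lambda>r. ys ! (p \<circ> s) r) [0..<n] = map (\<lambda>r. permute_list p ys ! s r) [0..<n]"
    using nth(1) permutes_in_image[OF assms(3)] by (auto intro!: map_cong)
  then have "z = P (map (\<lambda>r. permute_list p ys ! s r) [0..<n])" unfolding ys(1) by (rule arg_cong)
  moreover have "\<forall>r<n. permute_list p ys ! r \<in> permute_list p As ! r"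
    using ys(3) nth permutes_in_image[OF p] by simp
  ultimately show "z \<in> {P (map (\<lambda>r. xs ! s r) [0..<n]) | xs. length xs = n \<and>
      (\<forall>r<n. xs ! r \<in> permute_list p As ! r)}"
    using ys(2) by (intro CollectI exI[of _ "permute_list p ys"]) simp
qed

lemma brk_permute_list:
  assumes "length As = n" "p permutes {0..<n}" "s permutes {0..<n}"
  shows "brk scl n P s (permute_list p As) = brk scl n P (p \<circ> s) As"
proof
  show "brk scl n P (p \<circ> s) As \<subseteq> brk scl n P s (permute_list p As)"
    by (rule brk_subset_brk_permute_list[OF assms])
  have inv_p: "inv p permutes {0..<n}" using permutes_inv[OF assms(2)] .
  have "brk scl n P s (permute_list p As) = brk scl n P (inv p \<circ> (p \<circ> s)) (permute_list p As)"
    using permutes_inv_o(2)[OF assms(2)] by (simp add: o_assoc)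
  also have "\<dots> \<subseteq> brk scl n P (p \<circ> s) (permute_list (inv p) (permute_list p As))"
    using assms by (intro brk_subset_brk_permute_list inv_p permutes_compose) simp_all
  also have "permute_list (inv p) (permute_list p As) = As"
    using permute_list_compose[of "inv p" As p] permutes_inv_o(1)[OF assms(2)] inv_p assms(1)
    by (simp add: atLeast0LessThan)
  finally show "brk scl n P s (permute_list p As) \<subseteq> brk scl n P (p \<circ> s) As" .
qed

lemma product_in_brk_id:
  assumes "length xs = n" "\<forall>r<n. xs ! r \<in> As ! r"
  shows "P xs \<in> brk scl n P id As"
proof -
  have "map (\<lambda>r. xs ! id r) [0..<n] = xs" using map_nth[of xs] assms(1) by simp
  then show ?thesis unfolding brk_def using assms by (intro span_base) force
qed

lemma brk_basis_subset_span:
  assumes "length ixs = n" "s permutes {0..<n}"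
  shows "brk scl n P s (map (uset e V) (map Some ixs)) \<subseteq> span {P (map (\<lambda>r. e (ixs ! s r)) [0..<n])}"
  unfolding brk_def
proof (intro span_mono subsetI)
  fix z assume "z \<in> {P (map (\<lambda>r. xs ! s r) [0..<n]) | xs. length xs = n \<and>
      (\<forall>r<n. xs ! r \<in> map (uset e V) (map Some ixs) ! r)}"
  then obtain xs where xs: "z = P (map (\<lambda>r. xs ! s r) [0..<n])"
      "\<forall>r<n. xs ! r \<in> map (uset e V) (map Some ixs) ! r"
    by blast
  have "xs ! s r = e (ixs ! s r)" if "r < n" for r
    using xs(2) permutes_in_image[OF assms(2)] that assms(1) by (auto simp: uset_def)
  then have "map (\<lambda>r. xs ! s r) [0..<n] = map (\<lambda>r. e (ixs ! s r)) [0..<n]" by simp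
  then show "z \<in> {P (map (\<lambda>r. e (ixs ! s r)) [0..<n])}" unfolding xs(1) by (metis singletonI)
qed

definition annihilating :: "'v set \<Rightarrow> 'v set \<Rightarrow> bool" where
  "annihilating A B \<longleftrightarrow>
     (\<forall>L p q. length L = n \<and> p < n \<and> q < n \<and> p \<noteq> q \<and> L ! p \<in> A \<and> L ! q \<in> B \<longrightarrow> P L = 0)"

lemma annihilatingD:
  "annihilating A B \<Longrightarrow> length L = n \<Longrightarrow> p < n \<Longrightarrow> q < n \<Longrightarrow> p \<noteq> q \<Longrightarrow> L ! p \<in> A \<Longrightarrow> L ! q \<in> B
   \<Longrightarrow> P L = 0"
  unfolding annihilating_def by blast

lemma annihilating_sym: "annihilating A B \<Longrightarrow> annihilating B A"
  unfolding annihilating_def by metis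

lemma annihilating_mono: "annihilating A B \<Longrightarrow> A' \<subseteq> A \<Longrightarrow> B' \<subseteq> B \<Longrightarrow> annihilating A' B'"
  unfolding annihilating_def by blast

lemma annihilating_Un: "annihilating A B \<Longrightarrow> annihilating A' B \<Longrightarrow> annihilating (A \<union> A') B"
  unfolding annihilating_def by blast

lemma annihilatingI_spanning:
  assumes "span S = UNIV"
    and "\<And>L p q. length L = n \<Longrightarrow> p < n \<Longrightarrow> q < n \<Longrightarrow> p \<noteq> q \<Longrightarrow> L ! p \<in> A \<Longrightarrow> L ! q \<in> B \<Longrightarrow>
           \<forall>r<n. r \<noteq> p \<longrightarrow> r \<noteq> q \<longrightarrow> L ! r \<in> S \<Longrightarrow> P L = 0"
  shows "annihilating A B"
  unfolding annihilating_def
proof (intro allI impI, elim conjE)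
  fix L p q assume L: "length L = n" "p < n" "q < n" "p \<noteq> q" "L ! p \<in> A" "L ! q \<in> B"
  let ?G = "\<lambda>r. if r = p then {L ! p} else if r = q then {L ! q} else S"
  show "P L = 0"
  proof (rule eq_0_on_spans[of ?G])
    fix xs assume "length xs = n" "\<forall>r<n. xs ! r \<in> ?G r"
    then show "P xs = 0" using L by (intro assms(2)[of xs p q]) (auto dest: spec[of _ p] spec[of _ q])
  qed (use L assms(1) in \<open>auto intro: span_base\<close>)
qed

lemma annihilating_span:
  assumes "annihilating A B"
  shows "annihilating (span A) (span B)"
  unfolding annihilating_def
proof (intro allI impI, elim conjE)
  fix L p q assume L: "length L = n" "p < n" "q < n" "p \<noteq> q" "L ! p \<in> span A" "L ! q \<in> span B"
  let ?G = "\<lambda>r. if r = p then A else if r = q then B else UNIV"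
  show "P L = 0"
  proof (rule eq_0_on_spans[of ?G])
    fix xs assume "length xs = n" "\<forall>r<n. xs ! r \<in> ?G r"
    then show "P xs = 0" using L by (intro annihilatingD[OF assms, of xs p q]) auto
  qed (use L in \<open>auto intro: span_base\<close>)
qed

lemma brk_eq_0_if_annihilating:
  assumes "annihilating A B" "2 \<le> n" "s permutes {0..<n}"
  shows "brk scl n P s (A # B # replicate (n - 2) UNIV) = {0}"
proof -
  have "z = 0" if z: "z \<in> {P (map (\<lambda>r. xs ! s r) [0..<n]) | xs. length xs = n \<and>
      (\<forall>r<n. xs ! r \<in> (A # B # replicate (n - 2) UNIV) ! r)}" for z
  proof -
    obtain xs where xs: "z = P (map (\<lambda>r. xs ! s r) [0..<n])"
        "\<forall>r<n. xs ! r \<in> (A # B # replicate (n - 2) UNIV) ! r"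
      using z by blast
    have inv: "s (inv s r) = r" "inv s r < n" if "r < n" for r
      using permutes_inverses(1)[OF assms(3)] permutes_in_image[OF permutes_inv[OF assms(3)]] that
      by auto
    have "xs ! 0 \<in> A" "xs ! 1 \<in> B" using xs(2) assms(2) by (auto dest: spec[of _ 0] spec[of _ 1])
    then show ?thesis unfolding xs(1) using inv[of 0] inv[of 1] assms(2)
      by (intro annihilatingD[OF assms(1), of _ "inv s 0" "inv s 1"]) (auto dest: arg_cong[of _ _ s])
  qed
  then show ?thesis unfolding brk_def using span_zero span_minimal[OF _ subspace_single_0] by blast
qed

lemma rhs_term_eq_0:
  assumes xs: "annihilating (set xs) B" "length xs = n"
    and ys: "length ys = n - 1" "m < n - 1" "ys ! m \<in> B"
    and ij: "i < n" "j < n" "s1 permutes {0..<n}" "s2 permutes {0..<n - 1}"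
  shows "rhs_term P n i j s1 s2 xs ys = 0"
proof -
  define M where "M = map (\<lambda>r. ys ! s2 r) [0..<j] @ [xs ! s1 i] @ map (\<lambda>r. ys ! s2 r) [j..<n - 1]"
  define r0 where "r0 = inv s2 m"
  have r0: "r0 < n - 1" "s2 r0 = m"
    using permutes_in_image[OF permutes_inv[OF ij(4)]] permutes_inverses(1)[OF ij(4)] ys(2)
    by (auto simp: r0_def)
  \<comment> \<open>The entry \<open>ys ! m\<close> of the inner product sits at position \<open>u\<close>.\<close>
  define u where "u = (if r0 < j then r0 else Suc r0)"
  have "length M = n" using ij(2) by (simp add: M_def)
  moreover have "M ! j \<in> set xs"
    using permutes_in_image[OF ij(3)] ij(1) xs(2) by (simp add: M_def nth_append)
  moreover have "M ! u = ys ! m" "u < n" "u \<noteq> j"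
    using r0 ij(2) by (auto simp: M_def u_def nth_append)
  ultimately have "P M = 0" using ij(2) ys(3) by (intro annihilatingD[OF xs(1), of M j u]) auto
  then show ?thesis unfolding rhs_term_def M_def[symmetric] using ij(1)
    by (intro eq_0_if_nth_eq_0[of _ i]) (auto simp: nth_append)
qed

end

section \<open>Colour gLt-algebras with a quasi-multiplicative basis\<close>

locale colour_gLt_qm_algebra =
  fixes scl :: "'k::field \<Rightarrow> 'v::ab_group_add \<Rightarrow> 'v"
    and Lg :: "'g::ab_group_add \<Rightarrow> 'v set"
    and eps :: "'g \<Rightarrow> 'g \<Rightarrow> 'k"
    and n :: nat
    and P :: "'v list \<Rightarrow> 'v"
    and alpha :: "nat \<Rightarrow> nat \<Rightarrow> nat \<Rightarrow> (nat \<Rightarrow> nat) \<Rightarrow> (nat \<Rightarrow> nat) \<Rightarrow> 'k"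
    and V W :: "'v set"
    and e :: "'i \<Rightarrow> 'v"
  assumes gLt: "colour_gLt_algebra scl Lg eps n P alpha"
    and qmb: "quasi_mult_basis scl Lg n P V W e"

sublocale colour_gLt_qm_algebra \<subseteq> nary_multilinear scl n P
  using gLt
  by (intro nary_multilinear.intro nary_multilinear_axioms.intro)
    (simp_all add: colour_gLt_algebra_def graded_nary_algebra_def graded_space_def)

context colour_gLt_qm_algebra
begin

lemma n_ge_2: "n \<ge> 2"
  using gLt by (simp add: colour_gLt_algebra_def)

lemma graded_product:
  "length xs = n \<Longrightarrow> length gs = n \<Longrightarrow> \<forall>r<n. xs ! r \<in> Lg (gs ! r) \<Longrightarrow> P xs \<in> Lg (sum_list gs)"
  using gLt by (simp add: colour_gLt_algebra_def graded_nary_algebra_def)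

lemma span_homogeneous: "span (\<Union>g. Lg g) = UNIV"
proof -
  have "graded_space scl Lg"
    using gLt by (simp add: colour_gLt_algebra_def graded_nary_algebra_def)
  have "v \<in> span (\<Union>g. Lg g)" for v
  proof -
    obtain c where "\<forall>g. c g \<in> Lg g" "v = (\<Sum>g\<in>{g. c g \<noteq> 0}. c g)"
      using \<open>graded_space scl Lg\<close> unfolding graded_space_def by blast
    then show ?thesis by (auto intro: span_sum span_base)
  qed
  then show ?thesis by blast
qed

lemma V_subspace: "subspace V"
  using qmb by (simp add: quasi_mult_basis_def graded_subspace_def)

lemma V_inter_W: "V \<inter> W = {0}"
  using qmb by (simp add: quasi_mult_basis_def)

lemma V_plus_W: "{v + w | v w. v \<in> V \<and> w \<in> W} = UNIV"
  using qmb by (simp add: quasi_mult_basis_def)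

lemma inj_basis: "inj e"
  using qmb by (simp add: quasi_mult_basis_def)

lemma independent_basis: "independent (range e)"
  using qmb by (simp add: quasi_mult_basis_def)

lemma span_basis: "span (range e) = W"
  using qmb by (simp add: quasi_mult_basis_def)

lemma homogeneous_basis: "homogeneous Lg (e i)"
  using qmb by (simp add: quasi_mult_basis_def)

lemma basis_product_in_line_or_V:
  "length ixs = n \<Longrightarrow> (\<exists>j. P (map e ixs) \<in> line scl (e j)) \<or> P (map e ixs) \<in> V"
  using qmb by (simp add: quasi_mult_basis_def)

lemma brk_basis_V_in_line:
  "0 < k \<Longrightarrow> k < n \<Longrightarrow> length ixs = k \<Longrightarrow> s permutes {0..<n} \<Longrightarrow>
     \<exists>j. brk scl n P s (map (\<lambda>i. {e i}) ixs @ replicate (n - k) V) \<subseteq> line scl (e j)"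
  using qmb unfolding quasi_mult_basis_def by blast

lemma span_V_basis: "span (V \<union> range e) = UNIV"
proof -
  have "v \<in> span (V \<union> range e)" for v
  proof -
    obtain a b where "v = a + b" "a \<in> V" "b \<in> W" using V_plus_W by blast
    moreover have "W \<subseteq> span (V \<union> range e)"
      unfolding span_basis[symmetric] by (rule span_mono) blast
    ultimately show ?thesis by (auto intro: span_add span_base)
  qed
  then show ?thesis by blast
qed

lemma homogeneous_basis_product:
  assumes "length ixs = n"
  shows "homogeneous Lg (P (map e ixs))"
proof -
  have "e i \<in> Lg (SOME g. e i \<in> Lg g)" for i
    using homogeneous_basis unfolding homogeneous_def by (rule someI_ex)
  then have "P (map e ixs) \<in> Lg (sum_list (map (\<lambda>i. SOME g. e i \<in> Lg g) ixs))"
    using assms by (intro graded_product) auto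
  then show ?thesis unfolding homogeneous_def by blast
qed

lemma line_eq_span: "line scl x = span {x}"
  by (simp add: line_def span_singleton)

lemma line_subset_W: "line scl (e r) \<subseteq> W"
  unfolding line_eq_span span_basis[symmetric] by (rule span_mono) auto

lemma line_inter_V: "b \<in> line scl (e r) \<Longrightarrow> b \<in> V \<Longrightarrow> b = 0"
  using line_subset_W V_inter_W by blast

lemma line_basis_unique:
  assumes "b \<noteq> 0" "b \<in> line scl (e r)" "b \<in> line scl (e r')"
  shows "r = r'"
proof (rule ccontr)
  assume "r \<noteq> r'"
  obtain c where c: "b = scl c (e r)" using assms(2) by (auto simp: line_def)
  obtain c' where c': "b = scl c' (e r')" using assms(3) by (auto simp: line_def)
  have "c \<noteq> 0" using c assms(1) by auto
  then have "e r = scl (inverse c) b" using c by simp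
  also have "\<dots> = scl (inverse c * c') (e r')" using c' by simp
  finally have eq: "e r = scl (inverse c * c') (e r')" .
  have "e r' \<in> range e - {e r}" using \<open>r \<noteq> r'\<close> inj_basis by (auto dest: injD)
  then have "scl (inverse c * c') (e r') \<in> span (range e - {e r})" by (intro span_scale span_base)
  then have "e r \<in> span (range e - {e r})" by (metis eq)
  then show False using independent_basis dependent_def by blast
qed

section \<open>Index maps and connections\<close>

lemma amap_eq_Some:
  assumes "brk scl n P s (map (uset e V) js) \<noteq> {0}" "brk scl n P s (map (uset e V) js) \<subseteq> line scl (e r)"
  shows "amap scl n P V e s js = {Some r}"
proof -
  let ?B = "brk scl n P s (map (uset e V) js)"
  obtain b where b: "b \<in> ?B" "b \<noteq> 0"
    using assms(1) subspace_0[OF subspace_span] unfolding brk_def by blast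
  have "r' = r" if "?B \<subseteq> line scl (e r')" for r'
    using line_basis_unique[OF b(2)] b(1) that assms(2) by blast
  then have "{Some r' | r'. ?B \<noteq> {0} \<and> ?B \<subseteq> line scl (e r')} = {Some r}"
    using assms by blast
  moreover have "\<not> ?B \<subseteq> V" using line_inter_V b assms(2) by blast
  ultimately show ?thesis unfolding amap_def Let_def by simp
qed

lemma amap_eq_None:
  assumes "brk scl n P s (map (uset e V) js) \<noteq> {0}" "brk scl n P s (map (uset e V) js) \<subseteq> V"
  shows "amap scl n P V e s js = {None}"
proof -
  let ?B = "brk scl n P s (map (uset e V) js)"
  obtain b where b: "b \<in> ?B" "b \<noteq> 0"
    using assms(1) subspace_0[OF subspace_span] unfolding brk_def by blast
  have "\<not> ?B \<subseteq> line scl (e r)" for r using line_inter_V b assms(2) by blast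
  then have "{Some r | r. ?B \<noteq> {0} \<and> ?B \<subseteq> line scl (e r)} = {}" by blast
  then show ?thesis using assms unfolding amap_def Let_def by simp
qed

lemma amap_singleton:
  assumes "x \<in> amap scl n P V e s js"
  shows "amap scl n P V e s js = {x}"
proof (cases x)
  case None
  then show ?thesis using assms amap_eq_None unfolding amap_def Let_def by (simp split: if_splits)
next
  case (Some r)
  then have "brk scl n P s (map (uset e V) js) \<noteq> {0}" "brk scl n P s (map (uset e V) js) \<subseteq> line scl (e r)"
    using assms unfolding amap_def Let_def by (auto split: if_splits)
  then show ?thesis using amap_eq_Some Some by blast
qed

lemma permutes_swap_first_two:
  assumes "s permutes {0..<n}"
  shows "Transposition.transpose 0 1 \<circ> s permutes {0..<n}"
proof (rule permutes_compose[OF assms])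
  show "Transposition.transpose 0 1 permutes {0..<n}" using n_ge_2 by (intro permutes_swap_id) auto
qed

lemma amap_swap_first_two:
  assumes "length rest = n - 2" "s permutes {0..<n}"
  shows "amap scl n P V e (Transposition.transpose 0 1 \<circ> s) (b # a # rest)
       = amap scl n P V e s (a # b # rest)"
proof -
  let ?t = "Transposition.transpose (0::nat) 1"
  let ?As = "map (uset e V) (b # a # rest)"
  have len: "length ?As = n" using assms(1) n_ge_2 by simp
  have t: "?t permutes {0..<n}" using n_ge_2 by (intro permutes_swap_id) auto
  have "permute_list ?t ?As = map (uset e V) (a # b # rest)"
  proof (rule nth_equalityI)
    fix m assume "m < length (permute_list ?t ?As)"
    then have "m < n" using len by simp
    moreover have "?t permutes {..<length ?As}"
      using len n_ge_2 by (intro permutes_swap_id) auto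
    ultimately show "permute_list ?t ?As ! m = map (uset e V) (a # b # rest) ! m"
      using len by (auto simp: permute_list_nth transpose_def nth_Cons split: nat.split)
  qed simp
  then have "brk scl n P s (map (uset e V) (a # b # rest)) = brk scl n P (?t \<circ> s) ?As"
    using brk_permute_list[OF len t assms(2)] by simp
  then show ?thesis unfolding amap_def by simp
qed

text \<open>A single step of the iteration of \<open>phi\<close> that defines connections.\<close>

definition linked :: "'i \<Rightarrow> 'i \<Rightarrow> bool" where
  "linked j k \<longleftrightarrow>
     (\<exists>X a. btup_len X = n - 1 \<and> a \<in> {Pl j, Br j} \<and> Some k \<in> mu scl n P V e (map_bsym Some a) X)"

lemma linkedI_amap:
  assumes "s permutes {0..<n}" "length js = n - 1" "Some k \<in> amap scl n P V e s (Some j # js)"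
  shows "linked j k"
proof -
  have "Some k \<in> mu scl n P V e (map_bsym Some (Pl j)) (PlT js)"
    using assms by (auto simp: mu_def)
  then show ?thesis unfolding linked_def using assms(2)
    by (intro exI[of _ "PlT js"] exI[of _ "Pl j"]) (simp add: btup_len_def)
qed

lemma linkedI_bmap:
  assumes "s permutes {0..<n}" "length js = n - 1" "amap scl n P V e s (Some k # js) = {Some j}"
  shows "linked j k"
proof -
  have "Some k \<in> mu scl n P V e (map_bsym Some (Pl j)) (BrT js)"
    using assms by (auto simp: mu_def bmap_def)
  then show ?thesis unfolding linked_def using assms(2)
    by (intro exI[of _ "BrT js"] exI[of _ "Pl j"]) (simp add: btup_len_def)
qed

lemma linkedI_bar:
  assumes "s permutes {0..<n}" "length js = n - 1" "m < n - 1"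
    "amap scl n P V e s (Some k # Some j # take m js @ drop (Suc m) js) = {js ! m}"
  shows "linked j k"
proof -
  have "Some k \<in> mu scl n P V e (map_bsym Some (Br j)) (PlT js)"
    using assms by (auto simp: mu_def bmap_def intro!: bexI[of _ m])
  then show ?thesis unfolding linked_def using assms(2)
    by (intro exI[of _ "PlT js"] exI[of _ "Br j"]) (simp add: btup_len_def)
qed

lemma linked_sym: "linked j k \<Longrightarrow> linked k j"
proof -
  assume "linked j k"
  then obtain X a where X: "btup_len X = n - 1" "a \<in> {Pl j, Br j}"
      "Some k \<in> mu scl n P V e (map_bsym Some a) X"
    unfolding linked_def by blast
  show "linked k j"
  proof (cases X)
    case (PlT js)
    have len: "length js = n - 1" using X(1) PlT by (simp add: btup_len_def)
    show ?thesis
    proof (cases "a = Pl j")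
      case True
      then obtain s where "s permutes {0..<n}" "Some k \<in> amap scl n P V e s (Some j # js)"
        using X(3) PlT by (auto simp: mu_def)
      then show ?thesis using len amap_singleton by (intro linkedI_bmap) auto
    next
      case False
      then obtain m s where ms: "m < n - 1" "s permutes {0..<n}"
          "amap scl n P V e s (Some k # Some j # take m js @ drop (Suc m) js) = {js ! m}"
        using X PlT by (auto simp: mu_def bmap_def)
      moreover have "length (take m js @ drop (Suc m) js) = n - 2" using ms(1) len by auto
      ultimately show ?thesis
        using amap_swap_first_two permutes_swap_first_two len
        by (intro linkedI_bar[of "Transposition.transpose 0 1 \<circ> s"]) auto
    qed
  next
    case (BrT js)
    then obtain s where "s permutes {0..<n}" "amap scl n P V e s (Some k # js) = {Some j}"
      using X by (auto simp: mu_def bmap_def)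
    then show ?thesis using X(1) BrT by (intro linkedI_amap) (auto simp: btup_len_def)
  qed
qed

definition bsym_index :: "'a bsym \<Rightarrow> 'a" where
  "bsym_index b = (case b of Pl x \<Rightarrow> x | Br x \<Rightarrow> x)"

lemma phi_elim:
  assumes "c \<in> phi scl n P V e J X"
  obtains a where "a \<in> J" "Some (bsym_index c) \<in> mu scl n P V e (map_bsym Some a) X"
  using assms unfolding phi_def Let_def by (cases c) (auto simp: bsym_index_def split: if_splits)

lemma phi_intro:
  assumes "a \<in> J" "Some k \<in> mu scl n P V e (map_bsym Some a) X"
  shows "Pl k \<in> phi scl n P V e J X" "Br k \<in> phi scl n P V e J X"
  using assms unfolding phi_def Let_def by auto

lemma foldl_phi_linked:
  assumes "\<forall>X\<in>set Xs. btup_len X = n - 1" "c \<in> foldl (phi scl n P V e) {a} Xs"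
  shows "linked\<^sup>*\<^sup>* (bsym_index a) (bsym_index c)"
  using assms
proof (induction Xs arbitrary: c rule: rev_induct)
  case (snoc X Xs)
  obtain b where b: "b \<in> foldl (phi scl n P V e) {a} Xs"
      "Some (bsym_index c) \<in> mu scl n P V e (map_bsym Some b) X"
    using snoc.prems(2) by (auto elim: phi_elim)
  have "b \<in> {Pl (bsym_index b), Br (bsym_index b)}" by (cases b) (simp_all add: bsym_index_def)
  then have "linked (bsym_index b) (bsym_index c)"
    unfolding linked_def using b(2) snoc.prems(1) by auto
  moreover have "linked\<^sup>*\<^sup>* (bsym_index a) (bsym_index b)" using snoc.IH b(1) snoc.prems(1) by simp
  ultimately show ?case by (simp add: rtranclp.rtrancl_into_rtrancl)
qed simp

lemma tranclp_linked_foldl_phi: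
  assumes "linked\<^sup>+\<^sup>+ i j"
  shows "\<exists>Xs a. Xs \<noteq> [] \<and> (\<forall>X\<in>set Xs. btup_len X = n - 1) \<and> a \<in> {Pl i, Br i} \<and>
     Pl j \<in> foldl (phi scl n P V e) {a} Xs \<and> Br j \<in> foldl (phi scl n P V e) {a} Xs"
  using assms
proof (induction rule: tranclp_induct)
  case (base k)
  then obtain X a where "btup_len X = n - 1" "a \<in> {Pl i, Br i}"
      "Some k \<in> mu scl n P V e (map_bsym Some a) X"
    unfolding linked_def by blast
  then show ?case using phi_intro[of a "{a}"] by (intro exI[of _ "[X]"] exI[of _ a]) auto
next
  case (step k l)
  then obtain Xs a where Xs: "Xs \<noteq> []" "\<forall>X\<in>set Xs. btup_len X = n - 1" "a \<in> {Pl i, Br i}"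
      "Pl k \<in> foldl (phi scl n P V e) {a} Xs" "Br k \<in> foldl (phi scl n P V e) {a} Xs"
    by blast
  obtain X b where X: "btup_len X = n - 1" "b \<in> {Pl k, Br k}"
      "Some l \<in> mu scl n P V e (map_bsym Some b) X"
    using step(2) unfolding linked_def by blast
  have "b \<in> foldl (phi scl n P V e) {a} Xs" using X(2) Xs(4,5) by auto
  from phi_intro[OF this X(3)] show ?case using Xs X(1)
    by (intro exI[of _ "Xs @ [X]"] exI[of _ a]) auto
qed

lemma foldl_phi_empty: "foldl (phi scl n P V e) {} Xs = {}"
  by (induction Xs) (simp_all add: phi_def)

lemma connected_iff_rtranclp_linked: "connected scl n P V e i j \<longleftrightarrow> linked\<^sup>*\<^sup>* i j"
proof
  assume "connected scl n P V e i j"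
  then consider "i = j"
    | Xs a where "\<forall>X\<in>set Xs. btup_len X = n - 1" "a \<in> {Pl i, Br i}"
        "Pl j \<in> foldl (phi scl n P V e) {a} Xs"
    unfolding connected_def by blast
  then show "linked\<^sup>*\<^sup>* i j"
  proof cases
    case 2
    then show ?thesis using foldl_phi_linked[of Xs "Pl j" a] by (auto simp: bsym_index_def)
  qed simp
next
  assume "linked\<^sup>*\<^sup>* i j"
  show "connected scl n P V e i j"
  proof (cases "i = j")
    case False
    then have "linked\<^sup>+\<^sup>+ i j" using \<open>linked\<^sup>*\<^sup>* i j\<close> by (blast dest: rtranclpD)
    then obtain Xs a where Xs: "Xs \<noteq> []" "\<forall>X\<in>set Xs. btup_len X = n - 1" "a \<in> {Pl i, Br i}"
        "Pl j \<in> foldl (phi scl n P V e) {a} Xs"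
      using tranclp_linked_foldl_phi by blast
    \<comment> \<open>Every prefix of the chain is nonempty, since \<open>phi\<close> maps the empty set to the empty set.\<close>
    have "foldl (phi scl n P V e) {a} (take t Xs) \<noteq> {}" for t
      using Xs(4) foldl_phi_empty by (metis append_take_drop_id empty_iff foldl_append)
    then show ?thesis unfolding connected_def using Xs by blast
  qed (simp add: connected_def)
qed

lemma cls_eq: "cls scl n P V e i = {j. linked\<^sup>*\<^sup>* i j}"
  by (simp add: cls_def connected_iff_rtranclp_linked)

lemma not_rtranclp_linked_if_cls_ne:
  assumes "cls scl n P V e i \<noteq> cls scl n P V e h" "a \<in> cls scl n P V e i" "b \<in> cls scl n P V e h"
  shows "\<not> linked\<^sup>*\<^sup>* a b"
proof
  have sym: "linked\<^sup>*\<^sup>* x y \<Longrightarrow> linked\<^sup>*\<^sup>* y x" for x y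
    using symp_rtranclp[OF sympI[OF linked_sym]] by (rule sympD)
  assume "linked\<^sup>*\<^sup>* a b"
  moreover have "linked\<^sup>*\<^sup>* i a" "linked\<^sup>*\<^sup>* h b" using assms(2,3) by (simp_all add: cls_eq)
  ultimately have ih: "linked\<^sup>*\<^sup>* i h"
    using rtranclp_trans[OF rtranclp_trans sym] by blast
  have "linked\<^sup>*\<^sup>* i x \<longleftrightarrow> linked\<^sup>*\<^sup>* h x" for x
    using rtranclp_trans[OF ih] rtranclp_trans[OF sym[OF ih]] by blast
  then have "cls scl n P V e i = cls scl n P V e h"
    unfolding cls_eq by blast
  then show False using assms(1) by simp
qed

section \<open>Nonzero products of basis vectors are connected\<close>

lemma brk_uset_in_line_or_V:
  assumes "length js = n" "js ! 0 \<noteq> None" "s permutes {0..<n}"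
  shows "(\<exists>r. brk scl n P s (map (uset e V) js) \<subseteq> line scl (e r)) \<or> brk scl n P s (map (uset e V) js) \<subseteq> V"
proof (cases "None \<in> set js")
  case False
  then obtain ixs where js: "js = map Some ixs" by (metis not_None_eq ex_map_conv)
  let ?ixs = "map (\<lambda>r. ixs ! s r) [0..<n]"
  have "length ixs = n" using assms(1) js by simp
  then have sub: "brk scl n P s (map (uset e V) js) \<subseteq> span {P (map e ?ixs)}"
    using brk_basis_subset_span[OF _ assms(3)] js by (simp add: comp_def)
  have "length ?ixs = n" by simp
  from basis_product_in_line_or_V[OF this] show ?thesis
  proof (elim disjE exE)
    fix r assume "P (map e ?ixs) \<in> line scl (e r)"
    then have "span {P (map e ?ixs)} \<subseteq> line scl (e r)"
      unfolding line_eq_span by (intro span_minimal) (auto simp: subspace_span)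
    then show ?thesis using sub by blast
  next
    assume "P (map e ?ixs) \<in> V"
    then have "span {P (map e ?ixs)} \<subseteq> V" by (intro span_minimal V_subspace) auto
    then show ?thesis using sub by blast
  qed
next
  case True
  \<comment> \<open>Move the basis indices to the front, as in the second axiom of a quasi-multiplicative basis.\<close>
  let ?F = "filter (\<lambda>x. x \<noteq> None) js" and ?N = "filter (\<lambda>x. x = None) js"
  define ixs where "ixs = map the ?F"
  have F: "map (uset e V) ?F = map (\<lambda>i. {e i}) ixs" and N: "map (uset e V) ?N = replicate (length ?N) V"
    unfolding ixs_def by (induction js) (auto simp: uset_def)
  have "length ?F + length ?N = n"
    using sum_length_filter_compl[of "\<lambda>x. x = None" js] assms(1) by simp
  moreover have "?F \<noteq> []"
  proof -
    have "js ! 0 \<in> set ?F" using assms(1,2) n_ge_2 by (auto simp: nth_mem)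
    then show ?thesis by (metis empty_iff list.set(1))
  qed
  moreover have "?N \<noteq> []" using True by (simp add: filter_empty_conv)
  ultimately have k: "0 < length ixs" "length ixs < n" "length ?N = n - length ixs"
    unfolding ixs_def by auto
  have "mset (?F @ ?N) = mset js" by (simp add: multiset_partition[symmetric])
  then obtain p where p: "p permutes {..<length js}" "permute_list p js = ?F @ ?N"
    using mset_eq_permutation by metis
  have p': "p permutes {0..<n}" using p(1) assms(1) by (simp add: atLeast0LessThan)
  have perm: "permute_list p (map (uset e V) js) = map (\<lambda>i. {e i}) ixs @ replicate (n - length ixs) V"
    using F N k(3) by (simp add: permute_list_map[OF p(1)] p(2))
  have s': "inv p \<circ> s permutes {0..<n}" using assms(3) p' by (simp add: permutes_compose permutes_inv)
  have "brk scl n P s (map (uset e V) js) = brk scl n P (p \<circ> (inv p \<circ> s)) (map (uset e V) js)"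
    using permutes_inv_o(1)[OF p'] by (simp add: o_assoc)
  also have "\<dots> = brk scl n P (inv p \<circ> s) (map (\<lambda>i. {e i}) ixs @ replicate (n - length ixs) V)"
    using brk_permute_list[of "map (uset e V) js" p "inv p \<circ> s"] assms(1) p' s' perm by simp
  finally show ?thesis using brk_basis_V_in_line[OF k(1,2) _ s'] by auto
qed

lemma rtranclp_linked_if_brk_ne_0:
  assumes s: "s permutes {0..<n}" and rest: "length rest = n - 2"
    and ne: "brk scl n P s (map (uset e V) (Some j # Some k # rest)) \<noteq> {0}"
  shows "linked\<^sup>*\<^sup>* j k"
proof -
  let ?B = "brk scl n P s (map (uset e V) (Some j # Some k # rest))"
  have "(\<exists>r. ?B \<subseteq> line scl (e r)) \<or> ?B \<subseteq> V"
    using brk_uset_in_line_or_V[OF _ _ s, of "Some j # Some k # rest"] rest n_ge_2 by simp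
  then show ?thesis
  proof (elim disjE exE)
    fix r assume "?B \<subseteq> line scl (e r)"
    then have am: "amap scl n P V e s (Some j # Some k # rest) = {Some r}" by (rule amap_eq_Some[OF ne])
    have "linked j r" using rest n_ge_2 am by (intro linkedI_amap[OF s, of "Some k # rest"]) simp_all
    moreover have "linked r k"
    proof (rule linkedI_bmap[OF permutes_swap_first_two[OF s]])
      show "amap scl n P V e (Transposition.transpose 0 1 \<circ> s) (Some k # Some j # rest) = {Some r}"
        using amap_swap_first_two[OF rest s] am by simp
    qed (use rest n_ge_2 in simp)
    ultimately show ?thesis by simp
  next
    assume "?B \<subseteq> V"
    then have "amap scl n P V e s (Some j # Some k # rest) = {None}" by (rule amap_eq_None[OF ne])
    then have "linked k j" using rest n_ge_2 by (intro linkedI_bar[OF s, of "None # rest" 0]) simp_all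
    then have "linked j k" by (rule linked_sym)
    then show ?thesis by simp
  qed
qed

lemma rtranclp_linked_if_product_ne_0:
  assumes L: "length L = n" "\<forall>r<n. L ! r \<in> V \<union> range e" "P L \<noteq> 0"
    and pq: "p < n" "q < n" "p \<noteq> q" "L ! p = e j" "L ! q = e k"
  shows "linked\<^sup>*\<^sup>* j k"
proof -
  define js where "js = map (\<lambda>r. if r = p then Some j else if r = q then Some k
      else if L ! r \<in> V then None else Some (inv e (L ! r))) [0..<n]"
  have len: "length js = n" by (simp add: js_def)
  have "L ! r \<in> map (uset e V) js ! r" if "r < n" for r
  proof -
    have "L ! r \<in> V \<union> range e" using L(2) that by blast
    then show ?thesis using that pq(4,5) by (auto simp: js_def uset_def f_inv_into_f)
  qed
  then have "P L \<in> brk scl n P id (map (uset e V) js)"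
    using L(1) len by (intro product_in_brk_id) simp_all
  then have ne: "brk scl n P id (map (uset e V) js) \<noteq> {0}" using L(3) by auto
  obtain s where s: "s permutes {0..<n}" "s p = 0" "s q = 1" using permutes_obtain_0_1[OF pq(1-3)] .
  define js' where "js' = permute_list (inv s) js"
  have len': "length js' = n" using len by (simp add: js'_def)
  have inv_s: "inv s permutes {..<length js}" using permutes_inv[OF s(1)] len by (simp add: atLeast0LessThan)
  have "inv s 0 = p" "inv s 1 = q" using permutes_inv_eq[OF s(1)] s(2,3) by auto
  then have "js' ! 0 = Some j" "js' ! 1 = Some k"
    using permute_list_nth[OF inv_s] len n_ge_2 pq(1-3) by (simp_all add: js'_def js_def)
  moreover obtain a b rest where abr: "js' = a # b # rest"
    using len' n_ge_2 by (metis Suc_le_length_iff numeral_2_eq_2)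
  ultimately have js': "js' = Some j # Some k # rest" by simp
  have "brk scl n P s (map (uset e V) js') = brk scl n P (inv s \<circ> s) (map (uset e V) js)"
    using brk_permute_list[of "map (uset e V) js" "inv s" s] s(1) len
      permute_list_map[OF inv_s, of "uset e V"]
    by (simp add: js'_def permutes_inv)
  also have "inv s \<circ> s = id" by (rule permutes_inv_o(2)[OF s(1)])
  finally have "brk scl n P s (map (uset e V) js') \<noteq> {0}" using ne by metis
  moreover have "length rest = n - 2" using len' abr by simp
  ultimately show ?thesis using rtranclp_linked_if_brk_ne_0[OF s(1)] js' by simp
qed

section \<open>Annihilation between classes\<close>

definition basis_products :: "'i set \<Rightarrow> 'v set" where
  "basis_products C = {P (map e ixs) | ixs. length ixs = n \<and> set ixs \<subseteq> C}"

lemma homogeneous_basis_products: "y \<in> e ` C \<union> basis_products C \<Longrightarrow> homogeneous Lg y"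
  using homogeneous_basis homogeneous_basis_product by (auto simp: basis_products_def)

lemma lhs_term_eq_0_if_rhs_terms_eq_0:
  assumes "k < n" "length xs = n" "length ys = n - 1"
    "\<forall>x\<in>set xs. homogeneous Lg x" "\<forall>y\<in>set ys. homogeneous Lg y"
    and rhs: "\<And>i j s1 s2. i < n \<Longrightarrow> j < n \<Longrightarrow> s1 permutes {0..<n} \<Longrightarrow> s2 permutes {0..<n - 1} \<Longrightarrow>
                rhs_term P n i j s1 s2 xs ys = 0"
  shows "lhs_term P k xs ys = 0"
proof -
  define deg where "deg x = (SOME g. x \<in> Lg g)" for x
  have deg: "x \<in> Lg (deg x)" if "homogeneous Lg x" for x
    using that unfolding homogeneous_def deg_def by (rule someI_ex)
  have "lhs_term P k xs ys =
          (\<Sum>(i, j, s1, s2) \<in> {0..<n} \<times> {0..<n} \<times> {s. s permutes {0..<n}} \<times> {s. s permutes {0..<n - 1}}.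
             scl (alpha i j k s1 s2 *
                  colour_factor eps (tag_degree (map deg xs) (map deg ys)) (lhs_order n k) (rhs_order n i j s1 s2))
                 (rhs_term P n i j s1 s2 xs ys))"
    using gLt assms(1-5) deg unfolding colour_gLt_algebra_def by (simp add: nth_mem)
  also have "\<dots> = 0" using rhs by (intro sum.neutral) auto
  finally show ?thesis .
qed

lemma annihilating_basis:
  assumes "\<forall>a\<in>Ca. \<forall>b\<in>Cb. \<not> linked\<^sup>*\<^sup>* a b"
  shows "annihilating (e ` Ca) (e ` Cb)"
proof (rule annihilatingI_spanning[OF span_V_basis])
  fix L p q
  assume L: "length L = n" "p < n" "q < n" "p \<noteq> q" "L ! p \<in> e ` Ca" "L ! q \<in> e ` Cb"
    "\<forall>r<n. r \<noteq> p \<longrightarrow> r \<noteq> q \<longrightarrow> L ! r \<in> V \<union> range e"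
  then obtain a b where ab: "a \<in> Ca" "b \<in> Cb" "L ! p = e a" "L ! q = e b" by blast
  have "\<forall>r<n. L ! r \<in> V \<union> range e" using L(7) ab(3,4) by (metis UnI2 rangeI)
  then show "P L = 0"
    using rtranclp_linked_if_product_ne_0[OF L(1) _ _ L(2-4) ab(3,4)] assms ab(1,2) by blast
qed

lemma annihilating_basis_products:
  assumes ann: "annihilating (e ` C) B" and hom: "\<forall>y\<in>B. homogeneous Lg y"
  shows "annihilating (basis_products C) B"
proof (rule annihilatingI_spanning[OF span_homogeneous])
  fix L p q
  assume L: "length L = n" "p < n" "q < n" "p \<noteq> q" "L ! p \<in> basis_products C" "L ! q \<in> B"
    "\<forall>r<n. r \<noteq> p \<longrightarrow> r \<noteq> q \<longrightarrow> L ! r \<in> (\<Union>g. Lg g)"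
  then obtain ixs where ixs: "length ixs = n" "set ixs \<subseteq> C" "L ! p = P (map e ixs)"
    unfolding basis_products_def by blast
  define ys where "ys = take p L @ drop (Suc p) L"
  have ys_nth: "ys ! r = L ! (if r < p then r else Suc r)" if "r < n - 1" for r
    using that L(1,2) by (auto simp: ys_def nth_append min_def)
  have "L = take p L @ [P (map e ixs)] @ drop (Suc p) L"
    using id_take_nth_drop[of p L] L(1,2) ixs(3) by simp
  then have "P L = lhs_term P p (map e ixs) ys"
    using L(1,2) by (simp add: lhs_term_def ys_def)
  also have "\<dots> = 0"
  proof (rule lhs_term_eq_0_if_rhs_terms_eq_0)
    show "length ys = n - 1" using L(1,2) by (simp add: ys_def)
    show "\<forall>y\<in>set ys. homogeneous Lg y"
    proof
      fix y assume "y \<in> set ys"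
      then obtain r where r: "r < n - 1" "y = ys ! r" using \<open>length ys = n - 1\<close> by (metis in_set_conv_nth)
      define u where "u = (if r < p then r else Suc r)"
      have "u < n" "u \<noteq> p" "y = L ! u" using r ys_nth L(1,2) by (auto simp: u_def)
      then show "homogeneous Lg y" using L(6,7) hom unfolding homogeneous_def by (cases "u = q") auto
    qed
    \<comment> \<open>The argument \<open>L ! q\<close> is entry \<open>m\<close> of \<open>ys\<close>.\<close>
    define m where "m = (if q < p then q else q - 1)"
    have "m < n - 1" "ys ! m \<in> B" using L(2-4,6) ys_nth by (auto simp: m_def)
    moreover have "annihilating (set (map e ixs)) B" using ann by (rule annihilating_mono) (use ixs(2) in auto)
    ultimately show "rhs_term P n i j s1 s2 (map e ixs) ys = 0"
      if "i < n" "j < n" "s1 permutes {0..<n}" "s2 permutes {0..<n - 1}" for i j s1 s2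
      using that ixs(1) \<open>length ys = n - 1\<close> by (intro rhs_term_eq_0) auto
  qed (use L(2) ixs(1) homogeneous_basis in auto)
  finally show "P L = 0" .
qed

lemma Jcls_subset_span:
  "Jcls scl n P V e i \<subseteq> span (e ` cls scl n P V e i \<union> basis_products (cls scl n P V e i))"
proof -
  let ?C = "cls scl n P V e i"
  have "span {P (map e ixs) | ixs. length ixs = n \<and> set ixs \<subseteq> ?C} \<subseteq> span (e ` ?C \<union> basis_products ?C)"
    by (rule span_mono) (auto simp: basis_products_def)
  moreover have "span (e ` ?C) \<subseteq> span (e ` ?C \<union> basis_products ?C)"
    by (rule span_mono) blast
  ultimately show ?thesis unfolding Jcls_def Let_def using span_add by blast
qed

lemma annihilating_Jcls:
  assumes "cls scl n P V e i \<noteq> cls scl n P V e h"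
  shows "annihilating (Jcls scl n P V e i) (Jcls scl n P V e h)"
proof -
  let ?Ci = "cls scl n P V e i" and ?Ch = "cls scl n P V e h"
  let ?Gi = "e ` ?Ci \<union> basis_products ?Ci" and ?Gh = "e ` ?Ch \<union> basis_products ?Ch"
  have "annihilating (e ` ?Ci) (e ` ?Ch)"
    using not_rtranclp_linked_if_cls_ne[OF assms] by (intro annihilating_basis) blast
  then have "annihilating ?Gi (e ` ?Ch)"
    using homogeneous_basis by (blast intro: annihilating_Un annihilating_basis_products)
  then have "annihilating (e ` ?Ch) ?Gi" by (rule annihilating_sym)
  then have "annihilating ?Gh ?Gi"
    using homogeneous_basis_products by (blast intro: annihilating_Un annihilating_basis_products)
  then have "annihilating (span ?Gi) (span ?Gh)" by (rule annihilating_span[OF annihilating_sym])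
  then show ?thesis by (rule annihilating_mono[OF _ Jcls_subset_span Jcls_subset_span])
qed

end

theorem lemma3p11:
  fixes scl :: "'k::field \<Rightarrow> 'v::ab_group_add \<Rightarrow> 'v"
    and Lg :: "'g::ab_group_add \<Rightarrow> 'v set"
    and eps :: "'g \<Rightarrow> 'g \<Rightarrow> 'k"
    and n :: nat
    and P :: "'v list \<Rightarrow> 'v"
    and alpha :: "nat \<Rightarrow> nat \<Rightarrow> nat \<Rightarrow> (nat \<Rightarrow> nat) \<Rightarrow> (nat \<Rightarrow> nat) \<Rightarrow> 'k"
    and V W :: "'v set"
    and e :: "'i \<Rightarrow> 'v"
    and i h :: 'i
  assumes "colour_gLt_algebra scl Lg eps n P alpha"
    and "quasi_mult_basis scl Lg n P V W e"
    and "cls scl n P V e i \<noteq> cls scl n P V e h"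
  shows "\<forall>s. s permutes {0..<n} \<longrightarrow>
           brk scl n P s (Jcls scl n P V e i # Jcls scl n P V e h # replicate (n - 2) UNIV) = {0}"
proof -
  interpret colour_gLt_qm_algebra scl Lg eps n P alpha V W e
    using assms(1,2) by unfold_locales
  show ?thesis
    using brk_eq_0_if_annihilating[OF annihilating_Jcls[OF assms(3)] n_ge_2] by blast
qed

end
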